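(* Let $\mu$ be a continuous capacity on $(\Omega,\mathcal{F})$ and $\mathbf{Y}=\{Y_n\}_{n\in\mathbb{N}}$ a real-valued stochastic process on $(\Omega,\mathcal{F})$. Then $\mathbf{Y}$ is stationary on $(\Omega,\mathcal{F},\mu)$ if and only if $\mu_{\mathbf{Y}}$ is $\tau$-invariant, where $\tau$ is the shift on $\mathbb{R}^{\mathbb{N}}$.
   Context: A capacity is $\mu:\mathcal{F}\to[0,1]$ with $\mu(\emptyset)=0$, $\mu(\Omega)=1$, monotone; continuous if $\mu(A_n)\to\mu(A)$ whenever $A_n\uparrow A$ or $A_n\downarrow A$. $\mathbf{Y}$ is stationary if for all $n\in\mathbb{N}$, $k\in\mathbb{N}_0$ and Borel $A\subseteq\mathbb{R}^{k+1}$, $\mu(\{(Y_n,\dots,Y_{n+k})\in A\})=\mu(\{(Y_{n+1},\dots,Y_{n+1+k})\in A\})$. $\mathbb{R}^{\mathbb{N}}$ carries the $\sigma$-algebra $\sigma(\mathcal{C})$ generated by cylinders $\{\mathbf{x}:(x_1,\dots,x_n)\in H\}$, $n\in\mathbb{N}$, $H\in\mathcal{B}(\mathbb{R}^n)$; $\tau(x_1,x_2,x_3,\dots)=(x_2,x_3,\dots)$; $\mu_{\mathbf{Y}}(C)=\mu(\{\omega:(Y_1(\omega),Y_2(\omega),\dots)\in C\})$ for $C\in\sigma(\mathcal{C})$; $\tau$-invariance means $\mu_{\mathbf{Y}}(\tau^{-1}C)=\mu_{\mathbf{Y}}(C)$ for all $C\in\sigma(\mathcal{C})$. *)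

theory Defs
  imports "HOL-Probability.Probability"
begin

text \<open>The measurable space (Omega, F) is represented by a measure M with
  Omega = space M and F = sets M; only its sigma-algebra is used.
  A capacity is a set function mu on F with values in [0,1].\<close>

definition capacity :: "'a measure \<Rightarrow> ('a set \<Rightarrow> real) \<Rightarrow> bool" where
  "capacity M \<mu> \<longleftrightarrow>
     (\<forall>A\<in>sets M. 0 \<le> \<mu> A \<and> \<mu> A \<le> 1) \<and>
     \<mu> {} = 0 \<and> \<mu> (space M) = 1 \<and>
     (\<forall>A\<in>sets M. \<forall>B\<in>sets M. A \<subseteq> B \<longrightarrow> \<mu> A \<le> \<mu> B)"

definition continuous_capacity :: "'a measure \<Rightarrow> ('a set \<Rightarrow> real) \<Rightarrow> bool" where
  "continuous_capacity M \<mu> \<longleftrightarrow> capacity M \<mu> \<and>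
     (\<forall>A :: nat \<Rightarrow> 'a set. range A \<subseteq> sets M \<longrightarrow> incseq A \<longrightarrow>
         (\<lambda>n. \<mu> (A n)) \<longlonglongrightarrow> \<mu> (\<Union>n. A n)) \<and>
     (\<forall>A :: nat \<Rightarrow> 'a set. range A \<subseteq> sets M \<longrightarrow> decseq A \<longrightarrow>
         (\<lambda>n. \<mu> (A n)) \<longlonglongrightarrow> \<mu> (\<Inter>n. A n))"

text \<open>A real-valued stochastic process: Y n is F-measurable for every n.
  Indices are shifted to start at 0 (Y 0 plays the role of Y_1).\<close>

definition real_process :: "'a measure \<Rightarrow> (nat \<Rightarrow> 'a \<Rightarrow> real) \<Rightarrow> bool" where
  "real_process M Y \<longleftrightarrow> (\<forall>n. Y n \<in> borel_measurable M)"

text \<open>Stationarity: the finite-dimensional block (Y_n,...,Y_{n+k}), viewed as an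
  element of R^{k+1} = ({0..k} -> R) with its Borel (= product) sigma-algebra, has
  the same capacity-law as its one-step shift.\<close>

definition stationary :: "'a measure \<Rightarrow> ('a set \<Rightarrow> real) \<Rightarrow> (nat \<Rightarrow> 'a \<Rightarrow> real) \<Rightarrow> bool" where
  "stationary M \<mu> Y \<longleftrightarrow>
     (\<forall>n k. \<forall>A \<in> sets (PiM {..k} (\<lambda>_. borel)).
        \<mu> {\<omega> \<in> space M. (\<lambda>i\<in>{..k}. Y (n + i) \<omega>) \<in> A} =
        \<mu> {\<omega> \<in> space M. (\<lambda>i\<in>{..k}. Y (n + 1 + i) \<omega>) \<in> A})"

abbreviation seq_space :: "(nat \<Rightarrow> real) measure" where
  "seq_space \<equiv> PiM UNIV (\<lambda>_::nat. borel)"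

definition shift :: "(nat \<Rightarrow> real) \<Rightarrow> (nat \<Rightarrow> real)" where
  "shift x = (\<lambda>i. x (Suc i))"

definition law_cap :: "'a measure \<Rightarrow> ('a set \<Rightarrow> real) \<Rightarrow> (nat \<Rightarrow> 'a \<Rightarrow> real)
    \<Rightarrow> (nat \<Rightarrow> real) set \<Rightarrow> real" where
  "law_cap M \<mu> Y C = \<mu> {\<omega> \<in> space M. (\<lambda>i. Y i \<omega>) \<in> C}"

definition shift_invariant :: "((nat \<Rightarrow> real) set \<Rightarrow> real) \<Rightarrow> bool" where
  "shift_invariant \<nu> \<longleftrightarrow>
     (\<forall>C \<in> sets seq_space. \<nu> (shift -` C \<inter> space seq_space) = \<nu> C)"

end

theory Submission
  imports Defs
begin

(* Stationarity says that the laws of Y and of the shifted process (Y (Suc n))_n agree on all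
   cylinder sets {x. (x n, ..., x (n + k)) \<in> A}, and shift invariance says that they agree on all
   of sets seq_space. The initial cylinders {x. (x 0, ..., x k) \<in> A} form an algebra generating
   sets seq_space, so it suffices that two continuous capacities agreeing on an algebra agree on the
   generated sigma-algebra. Capacities are not additive, so Dynkin's pi-lambda argument is not
   available; instead, the sets on which they agree form a monotone class by continuity along
   monotone sequences, and the monotone class theorem applies. *)

definition monotone_class :: "'a set set \<Rightarrow> bool" where
  "monotone_class \<M> \<longleftrightarrow>
     (\<forall>A :: nat \<Rightarrow> 'a set. (\<forall>n. A n \<in> \<M>) \<longrightarrow> incseq A \<longrightarrow> (\<Union>n. A n) \<in> \<M>) \<and>
     (\<forall>A :: nat \<Rightarrow> 'a set. (\<forall>n. A n \<in> \<M>) \<longrightarrow> decseq A \<longrightarrow> (\<Inter>n. A n) \<in> \<M>)"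

lemma monotone_classI:
  assumes "\<And>A :: nat \<Rightarrow> 'a set. (\<And>n. A n \<in> \<M>) \<Longrightarrow> incseq A \<Longrightarrow> (\<Union>n. A n) \<in> \<M>"
    and "\<And>A :: nat \<Rightarrow> 'a set. (\<And>n. A n \<in> \<M>) \<Longrightarrow> decseq A \<Longrightarrow> (\<Inter>n. A n) \<in> \<M>"
  shows "monotone_class \<M>"
  using assms unfolding monotone_class_def by blast

lemma monotone_class_incseq_Union:
  "monotone_class \<M> \<Longrightarrow> (\<And>n. A n \<in> \<M>) \<Longrightarrow> incseq A \<Longrightarrow> (\<Union>n. A n) \<in> \<M>"
  unfolding monotone_class_def by blast

lemma monotone_class_decseq_Inter:
  "monotone_class \<M> \<Longrightarrow> (\<And>n. A n \<in> \<M>) \<Longrightarrow> decseq A \<Longrightarrow> (\<Inter>n. A n) \<in> \<M>"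
  unfolding monotone_class_def by blast

lemma monotone_class_Pow: "monotone_class (Pow \<Omega>)"
  by (rule monotone_classI) blast+

lemma monotone_class_Diff:
  assumes "monotone_class \<M>"
  shows "monotone_class {A. \<Omega> - A \<in> \<M>}"
proof (rule monotone_classI)
  fix A :: "nat \<Rightarrow> _" assume "\<And>n. A n \<in> {A. \<Omega> - A \<in> \<M>}"
  then have A: "\<Omega> - A n \<in> \<M>" for n by blast
  { assume "incseq A"
    then have "decseq (\<lambda>n. \<Omega> - A n)"
      by (intro decseq_SucI) (blast dest: incseq_SucD)
    with A have "(\<Inter>n. \<Omega> - A n) \<in> \<M>"
      by (rule monotone_class_decseq_Inter[OF assms])
    moreover have "\<Omega> - (\<Union>n. A n) = (\<Inter>n. \<Omega> - A n)" by blast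
    ultimately show "(\<Union>n. A n) \<in> {A. \<Omega> - A \<in> \<M>}" by (simp only: mem_Collect_eq) }
  { assume "decseq A"
    then have "incseq (\<lambda>n. \<Omega> - A n)"
      by (intro incseq_SucI) (blast dest: decseq_SucD)
    with A have "(\<Union>n. \<Omega> - A n) \<in> \<M>"
      by (rule monotone_class_incseq_Union[OF assms])
    moreover have "\<Omega> - (\<Inter>n. A n) = (\<Union>n. \<Omega> - A n)" by blast
    ultimately show "(\<Inter>n. A n) \<in> {A. \<Omega> - A \<in> \<M>}" by (simp only: mem_Collect_eq) }
qed

lemma monotone_class_Int:
  assumes "monotone_class \<M>"
  shows "monotone_class {A. A \<inter> B \<in> \<M>}"
proof (rule monotone_classI)
  fix A :: "nat \<Rightarrow> _" assume "\<And>n. A n \<in> {A. A \<inter> B \<in> \<M>}"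
  then have A: "A n \<inter> B \<in> \<M>" for n by blast
  { assume "incseq A"
    then have "incseq (\<lambda>n. A n \<inter> B)"
      by (intro incseq_SucI) (blast dest: incseq_SucD)
    with A have "(\<Union>n. A n \<inter> B) \<in> \<M>"
      by (rule monotone_class_incseq_Union[OF assms])
    moreover have "(\<Union>n. A n) \<inter> B = (\<Union>n. A n \<inter> B)" by blast
    ultimately show "(\<Union>n. A n) \<in> {A. A \<inter> B \<in> \<M>}" by (simp only: mem_Collect_eq) }
  { assume "decseq A"
    then have "decseq (\<lambda>n. A n \<inter> B)"
      by (intro decseq_SucI) (blast dest: decseq_SucD)
    with A have "(\<Inter>n. A n \<inter> B) \<in> \<M>"
      by (rule monotone_class_decseq_Inter[OF assms])
    moreover have "(\<Inter>n. A n) \<inter> B = (\<Inter>n. A n \<inter> B)" by blast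
    ultimately show "(\<Inter>n. A n) \<in> {A. A \<inter> B \<in> \<M>}" by (simp only: mem_Collect_eq) }
qed

inductive_set monotone_hull :: "'a set set \<Rightarrow> 'a set set" for G :: "'a set set" where
  basic: "A \<in> G \<Longrightarrow> A \<in> monotone_hull G"
| incseq_Union: "(\<And>n::nat. A n \<in> monotone_hull G) \<Longrightarrow> incseq A \<Longrightarrow> (\<Union>n. A n) \<in> monotone_hull G"
| decseq_Inter: "(\<And>n::nat. A n \<in> monotone_hull G) \<Longrightarrow> decseq A \<Longrightarrow> (\<Inter>n. A n) \<in> monotone_hull G"

lemma monotone_class_monotone_hull: "monotone_class (monotone_hull G)"
  by (rule monotone_classI) (auto intro: monotone_hull.intros)

lemma monotone_hull_minimal:
  assumes "G \<subseteq> \<M>" and "monotone_class \<M>"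
  shows "monotone_hull G \<subseteq> \<M>"
proof
  fix A assume "A \<in> monotone_hull G"
  then show "A \<in> \<M>"
  proof induction
    case (basic A) then show ?case using assms(1) by blast
  next
    case (incseq_Union A)
    then show ?case by (intro monotone_class_incseq_Union[OF assms(2)])
  next
    case (decseq_Inter A)
    then show ?case by (intro monotone_class_decseq_Inter[OF assms(2)])
  qed
qed

lemma sigma_algebra_iff_incseq_Union:
  "sigma_algebra \<Omega> M \<longleftrightarrow>
     algebra \<Omega> M \<and> (\<forall>A :: nat \<Rightarrow> 'a set. range A \<subseteq> M \<longrightarrow> incseq A \<longrightarrow> (\<Union>n. A n) \<in> M)"
proof (intro iffI conjI allI impI)
  assume "sigma_algebra \<Omega> M"
  then interpret sigma_algebra \<Omega> M .
  show "algebra \<Omega> M" by (rule algebra_axioms)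
  show "(\<Union>n. A n) \<in> M" if "range A \<subseteq> M" for A :: "nat \<Rightarrow> 'a set"
    using that by (rule countable_nat_UN)
next
  assume inc: "algebra \<Omega> M \<and> (\<forall>A :: nat \<Rightarrow> 'a set. range A \<subseteq> M \<longrightarrow> incseq A \<longrightarrow> (\<Union>n. A n) \<in> M)"
  then interpret algebra \<Omega> M by blast
  show "sigma_algebra \<Omega> M"
    unfolding sigma_algebra_iff
  proof (intro conjI allI impI algebra_axioms)
    fix A :: "nat \<Rightarrow> 'a set" assume "range A \<subseteq> M"
    then have "range (\<lambda>n. \<Union>i\<in>{0..<n}. A i) \<subseteq> M"
      using finite_UN[of "{0..<_}" A] by (simp add: image_subset_iff)
    moreover have "incseq (\<lambda>n. \<Union>i\<in>{0..<n}. A i)" by (rule incseq_SucI) fastforce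
    ultimately have "(\<Union>n. \<Union>i\<in>{0..<n}. A i) \<in> M" using inc by blast
    then show "(\<Union>n. A n) \<in> M" by (simp only: UN_UN_finite_eq)
  qed
qed

lemma algebra_monotone_hull:
  assumes G: "algebra \<Omega> G"
  shows "algebra \<Omega> (monotone_hull G)"
proof -
  let ?H = "monotone_hull G"
  have G_H: "G \<subseteq> ?H" by (blast intro: monotone_hull.basic)
  have G_Pow: "G \<subseteq> Pow \<Omega>" and G_empty: "{} \<in> G"
    and G_Diff: "\<And>A. A \<in> G \<Longrightarrow> \<Omega> - A \<in> G"
    and G_Int: "\<And>A B. A \<in> G \<Longrightarrow> B \<in> G \<Longrightarrow> A \<inter> B \<in> G"
    using G unfolding algebra_iff_Int by blast+
  have Int_G: "A \<inter> B \<in> ?H" if "A \<in> ?H" "B \<in> G" for A B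
  proof -
    have "G \<subseteq> {A. A \<inter> B \<in> ?H}"
      using G_H \<open>B \<in> G\<close> G_Int by blast
    then have "?H \<subseteq> {A. A \<inter> B \<in> ?H}"
      by (intro monotone_hull_minimal monotone_class_Int monotone_class_monotone_hull)
    then show ?thesis using \<open>A \<in> ?H\<close> by blast
  qed
  show ?thesis
    unfolding algebra_iff_Int
  proof (intro conjI ballI)
    show "?H \<subseteq> Pow \<Omega>"
      using G_Pow by (intro monotone_hull_minimal monotone_class_Pow)
    show "{} \<in> ?H"
      using G_H G_empty by blast
    show "\<Omega> - A \<in> ?H" if "A \<in> ?H" for A
    proof -
      have "G \<subseteq> {A. \<Omega> - A \<in> ?H}"
        using G_H G_Diff by blast
      then have "?H \<subseteq> {A. \<Omega> - A \<in> ?H}"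
        by (intro monotone_hull_minimal monotone_class_Diff monotone_class_monotone_hull)
      then show ?thesis using that by blast
    qed
    show "A \<inter> B \<in> ?H" if "A \<in> ?H" "B \<in> ?H" for A B
    proof -
      have "G \<subseteq> {B. B \<inter> A \<in> ?H}"
        using Int_G[OF \<open>A \<in> ?H\<close>] by (simp add: subset_iff Int_commute)
      then have "?H \<subseteq> {B. B \<inter> A \<in> ?H}"
        by (intro monotone_hull_minimal monotone_class_Int monotone_class_monotone_hull)
      then show ?thesis using \<open>B \<in> ?H\<close> by (auto simp: Int_commute)
    qed
  qed
qed

lemma sigma_algebra_monotone_hull:
  assumes "algebra \<Omega> G"
  shows "sigma_algebra \<Omega> (monotone_hull G)"
  unfolding sigma_algebra_iff_incseq_Union
  using algebra_monotone_hull[OF assms] by (blast intro: monotone_hull.incseq_Union)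

theorem sigma_sets_subset_monotone_class:
  assumes "algebra \<Omega> G" and "G \<subseteq> \<M>" and "monotone_class \<M>"
  shows "sigma_sets \<Omega> G \<subseteq> \<M>"
proof -
  have "sigma_sets \<Omega> G \<subseteq> monotone_hull G"
    by (intro sigma_algebra.sigma_sets_subset[OF sigma_algebra_monotone_hull[OF assms(1)]])
      (auto intro: monotone_hull.basic)
  also have "\<dots> \<subseteq> \<M>" by (rule monotone_hull_minimal[OF assms(2,3)])
  finally show ?thesis .
qed

lemma capacity_mono:
  "capacity M \<mu> \<Longrightarrow> A \<in> sets M \<Longrightarrow> B \<in> sets M \<Longrightarrow> A \<subseteq> B \<Longrightarrow> \<mu> A \<le> \<mu> B"
  unfolding capacity_def by blast

lemma continuous_capacity_incseq:
  assumes "continuous_capacity M \<mu>" and "\<And>n. A n \<in> sets M" and "incseq A"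
  shows "(\<lambda>n. \<mu> (A n)) \<longlonglongrightarrow> \<mu> (\<Union>n. A n)"
  using assms unfolding continuous_capacity_def by blast

lemma continuous_capacity_decseq:
  assumes "continuous_capacity M \<mu>" and "\<And>n. A n \<in> sets M" and "decseq A"
  shows "(\<lambda>n. \<mu> (A n)) \<longlonglongrightarrow> \<mu> (\<Inter>n. A n)"
  using assms unfolding continuous_capacity_def by blast

lemma sets_Collect_measurable_mem:
  "Z \<in> measurable M N \<Longrightarrow> C \<in> sets N \<Longrightarrow> {\<omega> \<in> space M. Z \<omega> \<in> C} \<in> sets M"
  using measurable_sets[of Z M N C] by (simp add: vimage_def Int_def conj_commute)

lemma capacity_distr:
  assumes cap: "capacity M \<mu>" and Z: "Z \<in> measurable M N"
  shows "capacity N (\<lambda>C. \<mu> {\<omega> \<in> space M. Z \<omega> \<in> C})"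
  unfolding capacity_def
proof (intro conjI ballI impI)
  show "0 \<le> \<mu> {\<omega> \<in> space M. Z \<omega> \<in> C}" "\<mu> {\<omega> \<in> space M. Z \<omega> \<in> C} \<le> 1" if "C \<in> sets N" for C
    using cap sets_Collect_measurable_mem[OF Z that] by (simp_all add: capacity_def)
  show "\<mu> {\<omega> \<in> space M. Z \<omega> \<in> {}} = 0"
    using cap by (simp add: capacity_def)
  have "{\<omega> \<in> space M. Z \<omega> \<in> space N} = space M"
    using measurable_space[OF Z] by blast
  then show "\<mu> {\<omega> \<in> space M. Z \<omega> \<in> space N} = 1"
    using cap by (simp add: capacity_def)
  show "\<mu> {\<omega> \<in> space M. Z \<omega> \<in> A} \<le> \<mu> {\<omega> \<in> space M. Z \<omega> \<in> B}"
    if "A \<in> sets N" "B \<in> sets N" "A \<subseteq> B" for A B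
    using that by (intro capacity_mono[OF cap] sets_Collect_measurable_mem[OF Z]) auto
qed

lemma continuous_capacity_distr:
  assumes \<mu>: "continuous_capacity M \<mu>" and Z: "Z \<in> measurable M N"
  shows "continuous_capacity N (\<lambda>C. \<mu> {\<omega> \<in> space M. Z \<omega> \<in> C})"
proof -
  let ?Z = "\<lambda>A. {\<omega> \<in> space M. Z \<omega> \<in> A}"
  have "capacity N (\<lambda>C. \<mu> (?Z C))"
    using \<mu> Z by (simp add: continuous_capacity_def capacity_distr)
  moreover have "(\<lambda>n. \<mu> (?Z (A n))) \<longlonglongrightarrow> \<mu> (?Z (\<Union>n. A n))"
    if "range A \<subseteq> sets N" "incseq A" for A :: "nat \<Rightarrow> 'b set"
  proof -
    have "incseq (\<lambda>n. ?Z (A n))"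
      using \<open>incseq A\<close> by (auto simp: incseq_def)
    with that(1) have "(\<lambda>n. \<mu> (?Z (A n))) \<longlonglongrightarrow> \<mu> (\<Union>n. ?Z (A n))"
      by (intro continuous_capacity_incseq[OF \<mu>] sets_Collect_measurable_mem[OF Z]) auto
    moreover have "(\<Union>n. ?Z (A n)) = ?Z (\<Union>n. A n)" by blast
    ultimately show ?thesis by simp
  qed
  moreover have "(\<lambda>n. \<mu> (?Z (A n))) \<longlonglongrightarrow> \<mu> (?Z (\<Inter>n. A n))"
    if "range A \<subseteq> sets N" "decseq A" for A :: "nat \<Rightarrow> 'b set"
  proof -
    have "decseq (\<lambda>n. ?Z (A n))"
      using \<open>decseq A\<close> by (auto simp: decseq_def)
    with that(1) have "(\<lambda>n. \<mu> (?Z (A n))) \<longlonglongrightarrow> \<mu> (\<Inter>n. ?Z (A n))"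
      by (intro continuous_capacity_decseq[OF \<mu>] sets_Collect_measurable_mem[OF Z]) auto
    moreover have "(\<Inter>n. ?Z (A n)) = ?Z (\<Inter>n. A n)" by blast
    ultimately show ?thesis by simp
  qed
  ultimately show ?thesis
    unfolding continuous_capacity_def by blast
qed

lemma continuous_capacity_eqI_generator:
  assumes \<nu>: "continuous_capacity N \<nu>" and \<nu>': "continuous_capacity N \<nu>'"
    and G: "algebra (space N) G" "sets N = sigma_sets (space N) G"
    and eq: "\<And>C. C \<in> G \<Longrightarrow> \<nu> C = \<nu>' C"
    and C: "C \<in> sets N"
  shows "\<nu> C = \<nu>' C"
proof -
  have "monotone_class {C \<in> sets N. \<nu> C = \<nu>' C}"
  proof (rule monotone_classI)
    fix A :: "nat \<Rightarrow> _" assume "\<And>n. A n \<in> {C \<in> sets N. \<nu> C = \<nu>' C}"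
    then have A: "A n \<in> sets N" and eq_A: "\<nu> (A n) = \<nu>' (A n)" for n by auto
    { assume "incseq A"
      have "(\<lambda>n. \<nu> (A n)) \<longlonglongrightarrow> \<nu> (\<Union>n. A n)"
        using continuous_capacity_incseq[OF \<nu> A \<open>incseq A\<close>] .
      moreover have "(\<lambda>n. \<nu> (A n)) \<longlonglongrightarrow> \<nu>' (\<Union>n. A n)"
        using continuous_capacity_incseq[OF \<nu>' A \<open>incseq A\<close>] by (simp add: eq_A)
      ultimately have "\<nu> (\<Union>n. A n) = \<nu>' (\<Union>n. A n)" by (rule LIMSEQ_unique)
      with A show "(\<Union>n. A n) \<in> {C \<in> sets N. \<nu> C = \<nu>' C}" by auto }
    { assume "decseq A"
      have "(\<lambda>n. \<nu> (A n)) \<longlonglongrightarrow> \<nu> (\<Inter>n. A n)"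
        using continuous_capacity_decseq[OF \<nu> A \<open>decseq A\<close>] .
      moreover have "(\<lambda>n. \<nu> (A n)) \<longlonglongrightarrow> \<nu>' (\<Inter>n. A n)"
        using continuous_capacity_decseq[OF \<nu>' A \<open>decseq A\<close>] by (simp add: eq_A)
      ultimately have "\<nu> (\<Inter>n. A n) = \<nu>' (\<Inter>n. A n)" by (rule LIMSEQ_unique)
      with A show "(\<Inter>n. A n) \<in> {C \<in> sets N. \<nu> C = \<nu>' C}" by auto }
  qed
  moreover have "G \<subseteq> {C \<in> sets N. \<nu> C = \<nu>' C}"
    using G(2) eq by (auto intro: sigma_sets.Basic)
  ultimately have "sets N \<subseteq> {C \<in> sets N. \<nu> C = \<nu>' C}"
    unfolding G(2) by (intro sigma_sets_subset_monotone_class[OF G(1)])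
  with C show ?thesis by blast
qed

definition initial_cylinders :: "(nat \<Rightarrow> 'b measure) \<Rightarrow> (nat \<Rightarrow> 'b) set set" where
  "initial_cylinders Ms = {prod_emb UNIV Ms {..k} X | k X. X \<in> sets (PiM {..k} Ms)}"

lemma algebra_initial_cylinders: "algebra (space (PiM UNIV Ms)) (initial_cylinders Ms)"
  unfolding algebra_iff_Int
proof (intro conjI ballI)
  show "initial_cylinders Ms \<subseteq> Pow (space (PiM UNIV Ms))"
    by (auto simp: initial_cylinders_def prod_emb_def space_PiM)
  have "{} = prod_emb UNIV Ms {..0} {}" by simp
  then show "{} \<in> initial_cylinders Ms"
    unfolding initial_cylinders_def by blast
next
  fix C assume "C \<in> initial_cylinders Ms"
  then obtain k X where C: "C = prod_emb UNIV Ms {..k} X" and X: "X \<in> sets (PiM {..k} Ms)"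
    by (auto simp: initial_cylinders_def)
  have "space (PiM UNIV Ms) - C = prod_emb UNIV Ms {..k} (space (PiM {..k} Ms) - X)"
    by (simp add: C space_PiM prod_emb_PiE)
  then show "space (PiM UNIV Ms) - C \<in> initial_cylinders Ms"
    unfolding initial_cylinders_def using X by blast
next
  fix C D assume "C \<in> initial_cylinders Ms" "D \<in> initial_cylinders Ms"
  then obtain k X l Y where C: "C = prod_emb UNIV Ms {..k} X" and X: "X \<in> sets (PiM {..k} Ms)"
    and D: "D = prod_emb UNIV Ms {..l} Y" and Y: "Y \<in> sets (PiM {..l} Ms)"
    by (auto simp: initial_cylinders_def)
  let ?m = "max k l"
  have "C \<inter> D = prod_emb UNIV Ms {..?m} (prod_emb {..?m} Ms {..k} X \<inter> prod_emb {..?m} Ms {..l} Y)"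
    by (simp add: C D prod_emb_Int)
  moreover have "prod_emb {..?m} Ms {..k} X \<inter> prod_emb {..?m} Ms {..l} Y \<in> sets (PiM {..?m} Ms)"
    using X Y by (intro sets.Int measurable_prod_emb) auto
  ultimately show "C \<inter> D \<in> initial_cylinders Ms"
    unfolding initial_cylinders_def by blast
qed

lemma sets_PiM_initial_cylinders:
  "sets (PiM UNIV Ms) = sigma_sets (space (PiM UNIV Ms)) (initial_cylinders Ms)"
proof (intro antisym sets.sigma_sets_subset)
  show "sets (PiM UNIV Ms) \<subseteq> sigma_sets (space (PiM UNIV Ms)) (initial_cylinders Ms)"
    unfolding sets_PiM_single space_PiM[symmetric]
  proof (intro sigma_sets_mono', safe)
    fix i A assume A: "A \<in> sets (Ms i)"
    have "{f \<in> space (PiM UNIV Ms). f i \<in> A} = prod_emb UNIV Ms {..i} {f \<in> space (PiM {..i} Ms). f i \<in> A}"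
      by (auto simp: prod_emb_def space_PiM)
    moreover have "{f \<in> space (PiM {..i} Ms). f i \<in> A} \<in> sets (PiM {..i} Ms)"
      using A by (intro sets_Collect_single) auto
    ultimately show "{f \<in> space (PiM UNIV Ms). f i \<in> A} \<in> initial_cylinders Ms"
      unfolding initial_cylinders_def by blast
  qed
  show "initial_cylinders Ms \<subseteq> sets (PiM UNIV Ms)"
    by (auto simp: initial_cylinders_def)
qed

lemma space_seq_space: "space seq_space = UNIV"
  by (simp add: space_PiM)

lemma measurable_real_process_paths:
  "real_process M Y \<Longrightarrow> (\<lambda>\<omega> i. Y i \<omega>) \<in> measurable M seq_space"
  unfolding real_process_def by (intro measurable_PiM_single') auto

lemma law_cap_prod_emb:
  "law_cap M \<mu> Y (prod_emb UNIV (\<lambda>_. borel) {..k} X) = \<mu> {\<omega> \<in> space M. (\<lambda>i\<in>{..k}. Y i \<omega>) \<in> X}"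
  by (simp add: law_cap_def prod_emb_def)

lemma law_cap_shift:
  "law_cap M \<mu> Y (shift -` C \<inter> space seq_space) = law_cap M \<mu> (\<lambda>i. Y (Suc i)) C"
  by (simp add: law_cap_def space_seq_space shift_def)

lemma law_cap_eqI_blocks:
  assumes \<mu>: "continuous_capacity M \<mu>" and Y: "real_process M Y" and Z: "real_process M Z"
    and blocks: "\<And>k X. X \<in> sets (PiM {..k} (\<lambda>_. borel)) \<Longrightarrow>
      \<mu> {\<omega> \<in> space M. (\<lambda>i\<in>{..k}. Y i \<omega>) \<in> X} = \<mu> {\<omega> \<in> space M. (\<lambda>i\<in>{..k}. Z i \<omega>) \<in> X}"
    and C: "C \<in> sets seq_space"
  shows "law_cap M \<mu> Y C = law_cap M \<mu> Z C"
proof (rule continuous_capacity_eqI_generator[OF _ _ algebra_initial_cylinders sets_PiM_initial_cylinders _ C])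
  show "continuous_capacity seq_space (law_cap M \<mu> Y)" "continuous_capacity seq_space (law_cap M \<mu> Z)"
    unfolding law_cap_def[abs_def]
    by (intro continuous_capacity_distr[OF \<mu>] measurable_real_process_paths Y Z)+
  fix D assume "D \<in> initial_cylinders (\<lambda>_. borel :: real measure)"
  then obtain k X where "D = prod_emb UNIV (\<lambda>_. borel) {..k} X" and "X \<in> sets (PiM {..k} (\<lambda>_. borel))"
    by (auto simp: initial_cylinders_def)
  then show "law_cap M \<mu> Y D = law_cap M \<mu> Z D"
    by (simp add: law_cap_prod_emb blocks)
qed

lemma sets_seq_space_block:
  "X \<in> sets (PiM {..k} (\<lambda>_. borel)) \<Longrightarrow> {x. (\<lambda>i\<in>{..k}. x (n + i)) \<in> X} \<in> sets seq_space"
  using measurable_sets[of "\<lambda>x. \<lambda>i\<in>{..k}. x (n + i)" seq_space "PiM {..k} (\<lambda>_. borel)" X]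
  by (simp add: vimage_def space_seq_space measurable_restrict measurable_component_singleton)

lemma stationaryI_law_cap_Suc:
  assumes "\<And>C. C \<in> sets seq_space \<Longrightarrow> law_cap M \<mu> Y C = law_cap M \<mu> (\<lambda>i. Y (Suc i)) C"
  shows "stationary M \<mu> Y"
  unfolding stationary_def
proof (intro allI ballI)
  fix n k :: nat and X :: "(nat \<Rightarrow> real) set" assume "X \<in> sets (PiM {..k} (\<lambda>_. borel))"
  from assms[OF sets_seq_space_block[OF this, of n]]
  show "\<mu> {\<omega> \<in> space M. (\<lambda>i\<in>{..k}. Y (n + i) \<omega>) \<in> X} =
      \<mu> {\<omega> \<in> space M. (\<lambda>i\<in>{..k}. Y (n + 1 + i) \<omega>) \<in> X}"
    by (simp add: law_cap_def)
qed

lemma stationary_law_cap_Suc_eq: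
  assumes \<mu>: "continuous_capacity M \<mu>" and Y: "real_process M Y" and "stationary M \<mu> Y"
    and C: "C \<in> sets seq_space"
  shows "law_cap M \<mu> Y C = law_cap M \<mu> (\<lambda>i. Y (Suc i)) C"
proof (rule law_cap_eqI_blocks[OF \<mu> Y _ _ C])
  show "real_process M (\<lambda>i. Y (Suc i))"
    using Y by (simp add: real_process_def)
  fix k :: nat and X :: "(nat \<Rightarrow> real) set" assume "X \<in> sets (PiM {..k} (\<lambda>_. borel))"
  with \<open>stationary M \<mu> Y\<close> have "\<mu> {\<omega> \<in> space M. (\<lambda>i\<in>{..k}. Y (0 + i) \<omega>) \<in> X} =
      \<mu> {\<omega> \<in> space M. (\<lambda>i\<in>{..k}. Y (0 + 1 + i) \<omega>) \<in> X}"
    unfolding stationary_def by blast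
  then show "\<mu> {\<omega> \<in> space M. (\<lambda>i\<in>{..k}. Y i \<omega>) \<in> X} =
      \<mu> {\<omega> \<in> space M. (\<lambda>i\<in>{..k}. Y (Suc i) \<omega>) \<in> X}"
    by simp
qed

theorem proposition7:
  fixes M :: "'a measure" and \<mu> :: "'a set \<Rightarrow> real" and Y :: "nat \<Rightarrow> 'a \<Rightarrow> real"
  assumes "continuous_capacity M \<mu>"
    and "real_process M Y"
  shows "stationary M \<mu> Y \<longleftrightarrow> shift_invariant (law_cap M \<mu> Y)"
proof -
  have "shift_invariant (law_cap M \<mu> Y) \<longleftrightarrow>
      (\<forall>C \<in> sets seq_space. law_cap M \<mu> Y C = law_cap M \<mu> (\<lambda>i. Y (Suc i)) C)"
    by (simp add: shift_invariant_def law_cap_shift eq_commute)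
  also have "\<dots> \<longleftrightarrow> stationary M \<mu> Y"
    using stationaryI_law_cap_Suc stationary_law_cap_Suc_eq[OF assms] by blast
  finally show ?thesis by blast
qed

end
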